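(* Let $P$ be a program and $G$ an execution graph with $\mathrm{cons}^P(G)$ and $\mathit{BE}(G)$, and let $T$ be a thread and $q$ an iteration index with $\mathit{fail}_G^T(q)$. Then $\mathrm{cons}^P(G-(T,q))$.
   Context: Programs. There are finite sets $\mathit{Register}$, $\mathit{Value}$, $\mathit{Location}$; $\mathit{State}=\mathit{Register}\to\mathit{Value}$; an update is a partial map $\mathit{Register}\rightharpoonup\mathit{Value}$, and $(\sigma\ll\mu)(r)=\mu(r)$ if $r\in\mathrm{Dom}(\mu)$, else $\sigma(r)$. Events are reads $R^m(x)$, writes $W^m(x,v)$, fences $F^m$, error $E$. A program $P$ consists of a finite set $\mathcal T$ of threads, each $T$ with a finite statement sequence $P_T(0),\dots,P_T(|P_T|-1)$. A statement is $\mathtt{step}(\epsilon,\delta)$ with $\epsilon:\mathit{State}\to\mathit{Event}$, $\delta:\mathit{State}\times(\mathit{Value}\cup\{\bot\})\to\mathit{Update}$, or $\mathtt{await}(n,\kappa)$ with $n\in\mathbb N$, $\kappa:\mathit{State}\to\{0,1\}$. Syntactic restriction: if $P_T(k)=\mathtt{await}(n,\cdot)$ then $n\le k$ and no $P_T(k')$ with $k'\in[k-n:k)$ is an await. ($[a:b)=\{a,\dots,b-1\}$.) An execution graph $G$ has a set $G.\mathrm E$ of triples $\langle T,t,e\rangle$ and a partial reads-from map $G.\mathrm{rf}$ from reads to writes. Thread-local semantics: $k_G^T(0)=0$, $\sigma_G^T(0)$ fixed; if $k_G^T(t)\ge|P_T|$ or no triple $\langle T,t,\cdot\rangle$ is in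 $G.\mathrm E$, execution stops ($N_G^T=t$). Otherwise with $S=P_T(k_G^T(t))$: $e_G^T(t)=\epsilon(\sigma_G^T(t))$ for $S=\mathtt{step}(\epsilon,\cdot)$, $F^{\mathrm{rlx}}$ for an await; $v_G^T(t)$ is the value of the write that $G.\mathrm{rf}$ assigns to $\langle T,t,e_G^T(t)\rangle$ if this is a read with defined rf, else $\bot$. For a step: $k_G^T(t+1)=k_G^T(t)+1$; if $e_G^T(t)$ is a read with $v_G^T(t)=\bot$ then $N_G^T=t+1$, $\sigma_G^T(t+1)=\sigma_G^T(t)$, else $\sigma_G^T(t+1)=\sigma_G^T(t)\ll\delta(\sigma_G^T(t),v_G^T(t))$. For $\mathtt{await}(n,\kappa)$: $\sigma_G^T(t+1)=\sigma_G^T(t)$ and $k_G^T(t+1)=k_G^T(t)+1$ if $\kappa(\sigma_G^T(t))=0$, else $k_G^T(t)-n$. $\mathrm{cons}^P(G)$ holds iff $G.\mathrm E=\{\langle T,t,e_G^T(t)\rangle\mid T\in\mathcal T,\ t<N_G^T\}$. Awaits: $\mathit{end}_G^T(0)<\mathit{end}_G^T(1)<\cdots$ enumerate the steps $t$ at which $P_T(k_G^T(t))$ is an await; $\mathit{len}_G^T(q)=n$ where $P_T(k_G^T(\mathit{end}_G^T(q)))=\mathtt{await}(n,\kappa)$; $\mathit{start}_G^T(q)=\mathit{end}_G^T(q)-\mathit{len}_G^T(q)$; $\mathit{fail}_G^T(q)$ iff $\kappa(\sigma_G^T(\mathit{end}_G^T(q)))=1$. Bounded effect. $\delta_G^T(t)=\delta(\sigma_G^T(t),v_G^T(t))$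 if $P_T(k_G^T(t))=\mathtt{step}(\cdot,\delta)$ and not ($e_G^T(t)$ is a read and $v_G^T(t)=\bot$); otherwise the empty update. $\mathit{vis}_G^T(t,u)=\mathrm{Dom}(\delta_G^T(t))\setminus\bigcup_{t<u'<u}\mathrm{Dom}(\delta_G^T(u'))$. $F(\mathtt{step}(\epsilon,\delta))=\{\epsilon,\delta\}$, $F(\mathtt{await}(n,\kappa))=\{\kappa\}$. A function $f$ depends on $R\subseteq\mathit{Register}$ iff there are states $\sigma,\sigma'$ agreeing outside $R$ with $f(\sigma)\neq f(\sigma')$ (for $f=\delta$: $\delta(\sigma,v)\neq\delta(\sigma',v)$ for some $v$). Step $t$ of $T$ register-reads-from to step $u$ ($t\to_{\mathrm{rrf}}u$) iff $u\ge t$ and some $f\in F(P_T(k_G^T(u)))$ depends on $\mathit{vis}_G^T(t,u)$. $\mathit{BE}(G)$ holds iff for all $T$, all $q$ with $\mathit{fail}_G^T(q)$ and all $t\in[\mathit{start}_G^T(q):\mathit{end}_G^T(q))$: $e_G^T(t)$ is not a write, and $t\to_{\mathrm{rrf}}u$ implies $u\in[\mathit{start}_G^T(q):\mathit{end}_G^T(q))$. Deletion. For a failed iteration $q$ of $T$, $G-(T,q)$ is the graph obtained by the partial renaming $r$: $r(\langle U,t,e\rangle)=\langle U,t,e\rangle$ if $U\neq T$ or $t<\mathit{start}_G^T(q)$; $r(\langle T,t,e\rangle)=\langle T,t-(\mathit{len}_G^T(q)+1),e\rangle$ if $t>\mathit{end}_G^T(q)$; undefined (event deleted) otherwise. Then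 $(G-(T,q)).\mathrm E=r(G.\mathrm E)$ and $(G-(T,q)).\mathrm{rf}(e)=r(G.\mathrm{rf}(r^{-1}(e)))$. *)

theory Defs
  imports Main
begin

text \<open>Events: reads R^m(x), writes W^m(x,v), fences F^m, error E.
  The access mode type 'm is kept abstract; the relaxed mode rlx (used for
  the fence event of an await) is an explicit parameter.\<close>

datatype ('l, 'v, 'm) event =
    Read 'm 'l
  | Write 'm 'l 'v
  | Fence 'm
  | Err

type_synonym ('r, 'v) state = "'r \<Rightarrow> 'v"
type_synonym ('r, 'v) update = "'r \<Rightarrow> 'v option"

definition upd :: "('r, 'v) state \<Rightarrow> ('r, 'v) update \<Rightarrow> ('r, 'v) state" where
  "upd \<sigma> \<mu> = (\<lambda>r. case \<mu> r of Some v \<Rightarrow> v | None \<Rightarrow> \<sigma> r)"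

datatype ('r, 'v, 'l, 'm) stmt =
    Step "('r, 'v) state \<Rightarrow> ('l, 'v, 'm) event"
         "('r, 'v) state \<Rightarrow> 'v option \<Rightarrow> ('r, 'v) update"
  | Await nat "('r, 'v) state \<Rightarrow> bool"

fun is_read :: "('l, 'v, 'm) event \<Rightarrow> bool" where
  "is_read (Read _ _) = True"
| "is_read _ = False"

fun is_write :: "('l, 'v, 'm) event \<Rightarrow> bool" where
  "is_write (Write _ _ _) = True"
| "is_write _ = False"

fun val_of_write :: "('l, 'v, 'm) event \<Rightarrow> 'v option" where
  "val_of_write (Write _ _ v) = Some v"
| "val_of_write _ = None"

fun is_await :: "('r, 'v, 'l, 'm) stmt \<Rightarrow> bool" where
  "is_await (Await _ _) = True"
| "is_await _ = False"

text \<open>A program: for each thread (the threads are all elements of the type 't)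
  its statement sequence, and the fixed initial register state.\<close>

record ('t, 'r, 'v, 'l, 'm) prog =
  code :: "'t \<Rightarrow> ('r, 'v, 'l, 'm) stmt list"
  init :: "'t \<Rightarrow> ('r, 'v) state"

definition wf_prog :: "('t, 'r, 'v, 'l, 'm) prog \<Rightarrow> bool" where
  "wf_prog P \<longleftrightarrow> (\<forall>T k. k < length (code P T) \<longrightarrow>
     (case code P T ! k of
        Await n \<kappa> \<Rightarrow> n \<le> k \<and> (\<forall>k'. k - n \<le> k' \<and> k' < k \<longrightarrow> \<not> is_await (code P T ! k'))
      | Step _ _ \<Rightarrow> True))"

type_synonym ('t, 'l, 'v, 'm) triple = "'t \<times> nat \<times> ('l, 'v, 'm) event"

record ('t, 'l, 'v, 'm) graph =
  gE  :: "('t, 'l, 'v, 'm) triple set"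
  grf :: "('t, 'l, 'v, 'm) triple \<Rightarrow> ('t, 'l, 'v, 'm) triple option"

fun evt :: "('t, 'l, 'v, 'm) triple \<Rightarrow> ('l, 'v, 'm) event" where
  "evt (_, _, e) = e"

definition wf_graph :: "('t, 'l, 'v, 'm) graph \<Rightarrow> bool" where
  "wf_graph G \<longleftrightarrow> (\<forall>x y. grf G x = Some y \<longrightarrow>
      x \<in> gE G \<and> is_read (evt x) \<and> y \<in> gE G \<and> is_write (evt y))"

definition cur_event :: "'m \<Rightarrow> ('r, 'v, 'l, 'm) stmt \<Rightarrow> ('r, 'v) state \<Rightarrow> ('l, 'v, 'm) event" where
  "cur_event rlx S \<sigma> = (case S of Step \<epsilon> _ \<Rightarrow> \<epsilon> \<sigma> | Await _ _ \<Rightarrow> Fence rlx)"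

definition read_val :: "('t, 'l, 'v, 'm) graph \<Rightarrow> 't \<Rightarrow> nat \<Rightarrow> ('l, 'v, 'm) event \<Rightarrow> 'v option" where
  "read_val G T t e = (if is_read e then
      (case grf G (T, t, e) of Some w \<Rightarrow> val_of_write (evt w) | None \<Rightarrow> None) else None)"

text \<open>cfg rlx P G T t = (k_G^T(t), sigma_G^T(t)), computed for all t
  (only the values for t below N_G^T are meaningful).\<close>
fun cfg :: "'m \<Rightarrow> ('t, 'r, 'v, 'l, 'm) prog \<Rightarrow> ('t, 'l, 'v, 'm) graph \<Rightarrow> 't \<Rightarrow> nat
            \<Rightarrow> nat \<times> ('r, 'v) state" where
  "cfg rlx P G T 0 = (0, init P T)"
| "cfg rlx P G T (Suc t) =
     (let (k, \<sigma>) = cfg rlx P G T t;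
          S = code P T ! k;
          e = cur_event rlx S \<sigma>;
          v = read_val G T t e
      in case S of
           Step _ \<delta> \<Rightarrow> (k + 1, if is_read e \<and> v = None then \<sigma> else upd \<sigma> (\<delta> \<sigma> v))
         | Await n \<kappa> \<Rightarrow> (if \<kappa> \<sigma> then k - n else k + 1, \<sigma>))"

definition kG where "kG rlx P G T t = fst (cfg rlx P G T t)"
definition sigmaG where "sigmaG rlx P G T t = snd (cfg rlx P G T t)"
definition stmtG where "stmtG rlx P G T t = code P T ! kG rlx P G T t"
definition eG where "eG rlx P G T t = cur_event rlx (stmtG rlx P G T t) (sigmaG rlx P G T t)"
definition vG where "vG rlx P G T t = read_val G T t (eG rlx P G T t)"

definition stopG where
  "stopG rlx P G T t \<longleftrightarrow>
     length (code P T) \<le> kG rlx P G T t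
   \<or> \<not> (\<exists>e. (T, t, e) \<in> gE G)
   \<or> (\<exists>t'. t = Suc t' \<and> \<not> is_await (stmtG rlx P G T t')
          \<and> is_read (eG rlx P G T t') \<and> vG rlx P G T t' = None)"

text \<open>aliveG ... t  iff  t < N_G^T  (N_G^T possibly infinite).\<close>
definition aliveG where
  "aliveG rlx P G T t \<longleftrightarrow> (\<forall>u\<le>t. \<not> stopG rlx P G T u)"

definition consP :: "'m \<Rightarrow> ('t, 'r, 'v, 'l, 'm) prog \<Rightarrow> ('t, 'l, 'v, 'm) graph \<Rightarrow> bool" where
  "consP rlx P G \<longleftrightarrow> gE G = {(T, t, eG rlx P G T t) | T t. aliveG rlx P G T t}"

definition await_step where
  "await_step rlx P G T t \<longleftrightarrow> aliveG rlx P G T t \<and> is_await (stmtG rlx P G T t)"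

text \<open>is_end ... q t  iff  t = end_G^T(q), the q-th (from 0) await step.\<close>
definition is_end where
  "is_end rlx P G T q t \<longleftrightarrow> await_step rlx P G T t \<and>
     card {u. u < t \<and> await_step rlx P G T u} = q"

definition endG where "endG rlx P G T q = (THE t. is_end rlx P G T q t)"

definition lenG where
  "lenG rlx P G T q = (case stmtG rlx P G T (endG rlx P G T q) of Await n _ \<Rightarrow> n | Step _ _ \<Rightarrow> 0)"

definition startG where "startG rlx P G T q = endG rlx P G T q - lenG rlx P G T q"

definition failG where
  "failG rlx P G T q \<longleftrightarrow> (\<exists>t. is_end rlx P G T q t) \<and>
     (case stmtG rlx P G T (endG rlx P G T q) of
        Await _ \<kappa> \<Rightarrow> \<kappa> (sigmaG rlx P G T (endG rlx P G T q))
      | Step _ _ \<Rightarrow> False)"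

definition deltaG where
  "deltaG rlx P G T t = (case stmtG rlx P G T t of
      Step _ \<delta> \<Rightarrow> if is_read (eG rlx P G T t) \<and> vG rlx P G T t = None then Map.empty
                  else \<delta> (sigmaG rlx P G T t) (vG rlx P G T t)
    | Await _ _ \<Rightarrow> Map.empty)"

definition visG where
  "visG rlx P G T t u = dom (deltaG rlx P G T t) - (\<Union>u'\<in>{u'. t < u' \<and> u' < u}. dom (deltaG rlx P G T u'))"

definition depends_on :: "(('r, 'v) state \<Rightarrow> 'b) \<Rightarrow> 'r set \<Rightarrow> bool" where
  "depends_on f R \<longleftrightarrow> (\<exists>\<sigma> \<sigma>'. (\<forall>r. r \<notin> R \<longrightarrow> \<sigma> r = \<sigma>' r) \<and> f \<sigma> \<noteq> f \<sigma>')"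

definition depends_on2 :: "(('r, 'v) state \<Rightarrow> 'w \<Rightarrow> 'b) \<Rightarrow> 'r set \<Rightarrow> bool" where
  "depends_on2 f R \<longleftrightarrow> (\<exists>\<sigma> \<sigma>' v. (\<forall>r. r \<notin> R \<longrightarrow> \<sigma> r = \<sigma>' r) \<and> f \<sigma> v \<noteq> f \<sigma>' v)"

definition stmt_depends :: "('r, 'v, 'l, 'm) stmt \<Rightarrow> 'r set \<Rightarrow> bool" where
  "stmt_depends S R = (case S of
      Step \<epsilon> \<delta> \<Rightarrow> depends_on \<epsilon> R \<or> depends_on2 \<delta> R
    | Await _ \<kappa> \<Rightarrow> depends_on \<kappa> R)"

definition rrf where
  "rrf rlx P G T t u \<longleftrightarrow> t \<le> u \<and> aliveG rlx P G T u \<and>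
     stmt_depends (stmtG rlx P G T u) (visG rlx P G T t u)"

definition BE :: "'m \<Rightarrow> ('t, 'r, 'v, 'l, 'm) prog \<Rightarrow> ('t, 'l, 'v, 'm) graph \<Rightarrow> bool" where
  "BE rlx P G \<longleftrightarrow> (\<forall>T q. failG rlx P G T q \<longrightarrow>
     (\<forall>t. startG rlx P G T q \<le> t \<and> t < endG rlx P G T q \<longrightarrow>
        \<not> is_write (eG rlx P G T t) \<and>
        (\<forall>u. rrf rlx P G T t u \<longrightarrow> startG rlx P G T q \<le> u \<and> u < endG rlx P G T q)))"

definition ren :: "'t \<Rightarrow> nat \<Rightarrow> nat \<Rightarrow> nat \<Rightarrow> ('t, 'l, 'v, 'm) triple \<Rightarrow> ('t, 'l, 'v, 'm) triple option" where
  "ren T s en l x = (case x of (U, t, e) \<Rightarrow>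
      if U \<noteq> T \<or> t < s then Some (U, t, e)
      else if t > en then Some (T, t - (l + 1), e)
      else None)"

text \<open>The inverse of the (injective, surjective) partial renaming ren.\<close>
definition ren_inv :: "'t \<Rightarrow> nat \<Rightarrow> nat \<Rightarrow> ('t, 'l, 'v, 'm) triple \<Rightarrow> ('t, 'l, 'v, 'm) triple" where
  "ren_inv T s l x = (case x of (U, t, e) \<Rightarrow>
      if U \<noteq> T \<or> t < s then (U, t, e) else (T, t + (l + 1), e))"

definition delete_iter :: "'m \<Rightarrow> ('t, 'r, 'v, 'l, 'm) prog \<Rightarrow> ('t, 'l, 'v, 'm) graph \<Rightarrow> 't \<Rightarrow> nat
    \<Rightarrow> ('t, 'l, 'v, 'm) graph" where
  "delete_iter rlx P G T q =
     (let s = startG rlx P G T q; en = endG rlx P G T q; l = lenG rlx P G T q;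
          r = ren T s en l
      in \<lparr> gE = {y. \<exists>x\<in>gE G. r x = Some y},
           grf = (\<lambda>e. Option.bind (grf G (ren_inv T s l e)) r) \<rparr>)"

end

theory Submission
  imports Defs
begin

text \<open>A failed iteration starts and ends at the same statement: before a successful
  await\<open>(n, \<kappa>)\<close> the thread has run through the \<open>n\<close> preceding statements, and the
  await jumps back over them. Hence, after the deletion, the thread replays its original
  run from just after the failed await, shifted by \<open>n + 1\<close> steps. The two register states
  can only differ on registers last written inside the iteration, and by bounded effect no
  later statement depends on those; so both runs produce the same events and stop at
  corresponding steps. Reads-from edges survive the renaming because the iteration
  contains no write.\<close>

lemma kG_0 [simp]: "kG rlx P G T 0 = 0"
  and sigmaG_0 [simp]: "sigmaG rlx P G T 0 = init P T"
  by (simp_all add: kG_def sigmaG_def)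

lemma kG_Suc:
  "kG rlx P G T (Suc t) = (case stmtG rlx P G T t of
      Step _ _ \<Rightarrow> kG rlx P G T t + 1
    | Await n \<kappa> \<Rightarrow> if \<kappa> (sigmaG rlx P G T t) then kG rlx P G T t - n else kG rlx P G T t + 1)"
  by (simp add: kG_def sigmaG_def stmtG_def Let_def split: prod.splits stmt.splits)

lemma upd_empty [simp]: "upd \<sigma> Map.empty = \<sigma>"
  by (simp add: upd_def)

lemma upd_apply_notin_dom: "r \<notin> dom \<mu> \<Longrightarrow> upd \<sigma> \<mu> r = \<sigma> r"
  by (auto simp: upd_def split: option.splits)

lemma upd_apply_in_dom: "r \<in> dom \<mu> \<Longrightarrow> upd \<sigma> \<mu> r = upd \<sigma>' \<mu> r"
  by (auto simp: upd_def split: option.splits)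

lemma sigmaG_Suc: "sigmaG rlx P G T (Suc t) = upd (sigmaG rlx P G T t) (deltaG rlx P G T t)"
  by (simp add: kG_def sigmaG_def stmtG_def deltaG_def eG_def vG_def Let_def
      split: prod.splits stmt.splits)

lemma kG_le: "kG rlx P G T t \<le> t"
  by (induction t) (auto simp: kG_Suc split: stmt.splits)

lemma aliveG_mono: "aliveG rlx P G T t \<Longrightarrow> u \<le> t \<Longrightarrow> aliveG rlx P G T u"
  by (auto simp: aliveG_def)

lemma aliveG_Suc: "aliveG rlx P G T (Suc t) \<longleftrightarrow> aliveG rlx P G T t \<and> \<not> stopG rlx P G T (Suc t)"
  by (auto simp: aliveG_def le_Suc_eq)

lemma aliveG_iff_prefix:
  "aliveG rlx P G T t \<longleftrightarrow> (\<forall>u<t. \<not> stopG rlx P G T u) \<and> \<not> stopG rlx P G T t"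
  by (auto simp: aliveG_def le_less)

lemma aliveG_imp_kG_less: "aliveG rlx P G T t \<Longrightarrow> kG rlx P G T t < length (code P T)"
  by (auto simp: aliveG_def stopG_def)

definition read_blocked ::
    "'m \<Rightarrow> ('t, 'r, 'v, 'l, 'm) prog \<Rightarrow> ('t, 'l, 'v, 'm) graph \<Rightarrow> 't \<Rightarrow> nat \<Rightarrow> bool" where
  "read_blocked rlx P G T t \<longleftrightarrow>
     \<not> is_await (stmtG rlx P G T t) \<and> is_read (eG rlx P G T t) \<and> vG rlx P G T t = None"

lemma stopG_iff_read_blocked:
  "stopG rlx P G T t \<longleftrightarrow> length (code P T) \<le> kG rlx P G T t \<or> (\<nexists>e. (T, t, e) \<in> gE G)
     \<or> (\<exists>t'. t = Suc t' \<and> read_blocked rlx P G T t')"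
  by (simp add: stopG_def read_blocked_def)

lemma consP_iff:
  "consP rlx P G \<longleftrightarrow> (\<forall>U t e. (U, t, e) \<in> gE G \<longleftrightarrow> e = eG rlx P G U t \<and> aliveG rlx P G U t)"
  unfolding consP_def set_eq_iff split_paired_All by auto

lemma visG_Suc:
  "t < u \<Longrightarrow> visG rlx P G T t (Suc u) = visG rlx P G T t u - dom (deltaG rlx P G T u)"
  by (auto simp: visG_def less_Suc_eq)

lemma visG_Suc_self: "visG rlx P G T u (Suc u) = dom (deltaG rlx P G T u)"
  by (auto simp: visG_def)

lemma sigmaG_eq_if_not_visible:
  "a \<le> u \<Longrightarrow> r \<notin> (\<Union>t\<in>{a..<u}. visG rlx P G T t u) \<Longrightarrow> sigmaG rlx P G T u r = sigmaG rlx P G T a r"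
proof (induction u)
  case (Suc u)
  show ?case
  proof (cases "a = Suc u")
    case False
    then have "a \<le> u" using Suc.prems by simp
    then have "u \<in> {a..<Suc u}" by simp
    then have not_written: "r \<notin> dom (deltaG rlx P G T u)"
      using Suc.prems(2) visG_Suc_self[of rlx P G T u] by blast
    then have "r \<notin> (\<Union>t\<in>{a..<u}. visG rlx P G T t u)"
      using Suc.prems(2) visG_Suc[of _ u rlx P G T] by fastforce
    then show ?thesis using Suc.IH \<open>a \<le> u\<close> not_written by (simp add: sigmaG_Suc upd_apply_notin_dom)
  qed simp
qed simp

lemma not_depends_on_eq: "\<not> depends_on f R \<Longrightarrow> (\<And>r. r \<notin> R \<Longrightarrow> \<sigma> r = \<sigma>' r) \<Longrightarrow> f \<sigma> = f \<sigma>'"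
  unfolding depends_on_def by blast

lemma depends_on2_iff: "depends_on2 f R \<longleftrightarrow> (\<exists>v. depends_on (\<lambda>\<sigma>. f \<sigma> v) R)"
  unfolding depends_on_def depends_on2_def by blast

lemma not_depends_on_Un:
  assumes "\<not> depends_on f A" and "\<not> depends_on f B"
  shows "\<not> depends_on f (A \<union> B)"
proof
  assume "depends_on f (A \<union> B)"
  then obtain \<sigma> \<sigma>' where agree: "\<And>r. r \<notin> A \<union> B \<Longrightarrow> \<sigma> r = \<sigma>' r" and "f \<sigma> \<noteq> f \<sigma>'"
    unfolding depends_on_def by blast
  define \<sigma>'' where "\<sigma>'' = (\<lambda>r. if r \<in> A then \<sigma>' r else \<sigma> r)"
  have "f \<sigma> = f \<sigma>''" using assms(1) by (rule not_depends_on_eq) (simp add: \<sigma>''_def)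
  also have "\<dots> = f \<sigma>'" using assms(2) by (rule not_depends_on_eq) (simp add: \<sigma>''_def agree)
  finally show False using \<open>f \<sigma> \<noteq> f \<sigma>'\<close> by contradiction
qed

lemma not_depends_on_UN:
  "finite I \<Longrightarrow> (\<And>i. i \<in> I \<Longrightarrow> \<not> depends_on f (R i)) \<Longrightarrow> \<not> depends_on f (\<Union>i\<in>I. R i)"
proof (induction I rule: finite_induct)
  case empty
  then show ?case by (simp add: depends_on_def fun_eq_iff[symmetric])
next
  case (insert i I)
  then show ?case by (simp add: not_depends_on_Un)
qed

lemma not_stmt_depends_UN:
  "finite I \<Longrightarrow> (\<And>i. i \<in> I \<Longrightarrow> \<not> stmt_depends S (R i)) \<Longrightarrow> \<not> stmt_depends S (\<Union>i\<in>I. R i)"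
  by (cases S) (simp_all add: stmt_depends_def depends_on2_iff not_depends_on_UN)

lemma not_stmt_depends_empty: "\<not> stmt_depends S {}"
  by (cases S) (auto simp: stmt_depends_def depends_on_def depends_on2_def fun_eq_iff[symmetric])

lemma step_simulation:
  assumes k: "kG rlx P G' U t = kG rlx P G U u"
    and \<sigma>: "\<And>r. r \<notin> R \<Longrightarrow> sigmaG rlx P G' U t r = sigmaG rlx P G U u r"
    and indep: "\<not> stmt_depends (stmtG rlx P G U u) R"
    and read_val: "\<And>e. read_val G' U t e = read_val G U u e"
  shows "stmtG rlx P G' U t = stmtG rlx P G U u"
    and "eG rlx P G' U t = eG rlx P G U u"
    and "vG rlx P G' U t = vG rlx P G U u"
    and "kG rlx P G' U (Suc t) = kG rlx P G U (Suc u)"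
    and "\<And>r. r \<notin> R - dom (deltaG rlx P G U u) \<Longrightarrow>
           sigmaG rlx P G' U (Suc t) r = sigmaG rlx P G U (Suc u) r"
proof -
  show stmt: "stmtG rlx P G' U t = stmtG rlx P G U u"
    using k by (simp add: stmtG_def)
  have same_value: "f (sigmaG rlx P G' U t) = f (sigmaG rlx P G U u)" if "\<not> depends_on f R" for f
    using that \<sigma> by (rule not_depends_on_eq)
  show event: "eG rlx P G' U t = eG rlx P G U u"
    using stmt indep same_value
    by (auto simp: eG_def cur_event_def stmt_depends_def split: stmt.splits)
  show val: "vG rlx P G' U t = vG rlx P G U u"
    using event read_val by (simp add: vG_def)
  have delta: "deltaG rlx P G' U t = deltaG rlx P G U u"
    using stmt event val indep same_value
    by (auto simp: deltaG_def stmt_depends_def depends_on2_iff split: stmt.splits)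
  show "kG rlx P G' U (Suc t) = kG rlx P G U (Suc u)"
    using stmt k indep same_value by (auto simp: kG_Suc stmt_depends_def split: stmt.splits)
  show "sigmaG rlx P G' U (Suc t) r = sigmaG rlx P G U (Suc u) r"
    if "r \<notin> R - dom (deltaG rlx P G U u)" for r
    using that \<sigma>[of r] upd_apply_in_dom[of r "deltaG rlx P G U u"]
    by (cases "r \<in> dom (deltaG rlx P G U u)") (simp_all add: sigmaG_Suc delta upd_apply_notin_dom)
qed

lemma is_end_unique: "is_end rlx P G T q t \<Longrightarrow> is_end rlx P G T q t' \<Longrightarrow> t = t'"
proof (induction t t' rule: linorder_less_wlog)
  case (less t t')
  then have "{u. u < t \<and> await_step rlx P G T u} \<subset> {u. u < t' \<and> await_step rlx P G T u}"
    by (auto simp: is_end_def)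
  then have "card {u. u < t \<and> await_step rlx P G T u} < card {u. u < t' \<and> await_step rlx P G T u}"
    by (intro psubset_card_mono) auto
  with less.prems show ?case by (simp add: is_end_def)
qed auto

lemma endG_eq: "is_end rlx P G T q t \<Longrightarrow> endG rlx P G T q = t"
  unfolding endG_def by (rule the_equality) (auto dest: is_end_unique)

lemma wf_prog_AwaitD:
  assumes "wf_prog P" and "k < length (code P T)" and "code P T ! k = Await n \<kappa>"
  shows "n \<le> k" and "\<And>k'. k - n \<le> k' \<Longrightarrow> k' < k \<Longrightarrow> \<not> is_await (code P T ! k')"
  using assms unfolding wf_prog_def by (fastforce split: stmt.splits)+

text \<open>Just before a successful await\<open>(n, \<kappa>)\<close> the thread has executed the \<open>n\<close> statements
  preceding the await one after the other: none of them is an await, and jumping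
  from a later await back into this block would jump over the await itself.\<close>

lemma kG_before_await:
  assumes wf: "wf_prog P" and alive: "aliveG rlx P G T t"
    and await: "stmtG rlx P G T t = Await n \<kappa>" and "j \<le> n"
  shows "kG rlx P G T (t - j) = kG rlx P G T t - j"
  using \<open>j \<le> n\<close>
proof (induction j)
  case (Suc j)
  define k where "k = kG rlx P G T t"
  define t' where "t' = t - Suc j"
  define k' where "k' = kG rlx P G T t'"
  have "k < length (code P T)" using aliveG_imp_kG_less[OF alive] k_def by simp
  moreover have code_k: "code P T ! k = Await n \<kappa>" using await by (simp add: stmtG_def k_def)
  ultimately have n_le: "n \<le> k" and block: "\<And>k''. k - n \<le> k'' \<Longrightarrow> k'' < k \<Longrightarrow> \<not> is_await (code P T ! k'')"
    using wf_prog_AwaitD[OF wf] by blast+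
  have "j < n" using Suc.prems by simp
  moreover have "n \<le> t" using n_le kG_le[of rlx P G T t] k_def by simp
  ultimately have "Suc t' = t - j" by (simp add: t'_def)
  then have next_k: "kG rlx P G T (Suc t') = k - j" using Suc k_def by simp
  have k'_lt: "k' < length (code P T)"
    using aliveG_imp_kG_less[OF aliveG_mono[OF alive]] by (simp add: k'_def t'_def)
  show ?case
  proof (cases "code P T ! k'")
    case Step
    then show ?thesis using next_k \<open>j < n\<close> n_le by (simp add: kG_Suc stmtG_def k'_def t'_def k_def)
  next
    case (Await n' \<kappa>')
    then have "\<not> (k - n \<le> k' \<and> k' < k)" using block by fastforce
    moreover have "n' \<le> k'" and block': "\<And>k''. k' - n' \<le> k'' \<Longrightarrow> k'' < k' \<Longrightarrow> \<not> is_await (code P T ! k'')"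
      using wf_prog_AwaitD[OF wf k'_lt Await] by blast+
    moreover have "kG rlx P G T (Suc t') = (if \<kappa>' (sigmaG rlx P G T t') then k' - n' else k' + 1)"
      using Await by (simp add: kG_Suc stmtG_def k'_def)
    ultimately have "k' - n' = k - j" and "k \<le> k'"
      using next_k \<open>j < n\<close> n_le by (auto split: if_splits)
    then have "k' = k" using block'[of k] code_k \<open>n' \<le> k'\<close> by fastforce
    then show ?thesis using Await code_k \<open>k' - n' = k - j\<close> \<open>j < n\<close> n_le by simp
  qed
qed simp

locale failed_iteration =
  fixes rlx :: 'm and P :: "('t, 'r, 'v, 'l, 'm) prog" and G :: "('t, 'l, 'v, 'm) graph"
    and T :: 't and q :: nat
  assumes wf_prog: "wf_prog P" and wf_graph: "wf_graph G" and cons: "consP rlx P G"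
    and BE: "BE rlx P G" and fail: "failG rlx P G T q"
begin

abbreviation "end_q \<equiv> endG rlx P G T q"
abbreviation "len_q \<equiv> lenG rlx P G T q"
abbreviation "start_q \<equiv> startG rlx P G T q"
abbreviation "G' \<equiv> delete_iter rlx P G T q"

lemma aliveG_end_q: "aliveG rlx P G T end_q"
proof -
  obtain t where "is_end rlx P G T q t" using fail by (auto simp: failG_def)
  moreover from this have "end_q = t" by (rule endG_eq)
  ultimately show ?thesis by (simp add: is_end_def await_step_def)
qed

lemma stmtG_end_q:
  obtains \<kappa> where "stmtG rlx P G T end_q = Await len_q \<kappa>" and "\<kappa> (sigmaG rlx P G T end_q)"
  using fail by (auto simp: failG_def lenG_def split: stmt.splits)

lemma start_q_add_len_q: "start_q + len_q = end_q"
proof -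
  obtain \<kappa> where "code P T ! kG rlx P G T end_q = Await len_q \<kappa>"
    using stmtG_end_q by (auto simp: stmtG_def)
  then have "len_q \<le> kG rlx P G T end_q"
    using wf_prog_AwaitD(1)[OF wf_prog aliveG_imp_kG_less[OF aliveG_end_q]] by blast
  then show ?thesis using kG_le[of rlx P G T end_q] by (simp add: startG_def)
qed

lemma kG_start_q: "kG rlx P G T start_q = kG rlx P G T (Suc end_q)"
proof -
  obtain \<kappa> where await: "stmtG rlx P G T end_q = Await len_q \<kappa>" and "\<kappa> (sigmaG rlx P G T end_q)"
    by (rule stmtG_end_q)
  then have "kG rlx P G T (Suc end_q) = kG rlx P G T end_q - len_q"
    by (simp add: kG_Suc)
  also have "\<dots> = kG rlx P G T start_q"
    using kG_before_await[OF wf_prog aliveG_end_q await, of len_q] by (simp add: startG_def)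
  finally show ?thesis ..
qed

lemma deltaG_end_q: "deltaG rlx P G T end_q = Map.empty"
  by (rule stmtG_end_q) (simp add: deltaG_def)

lemma bounded_effect:
  assumes "start_q \<le> t" and "t < end_q"
  shows "\<not> is_write (eG rlx P G T t)" and "rrf rlx P G T t u \<Longrightarrow> u < end_q"
  using BE fail assms unfolding BE_def by blast+

lemma not_is_write_failed_iteration:
  assumes "start_q \<le> t" and "t \<le> end_q"
  shows "\<not> is_write (eG rlx P G T t)"
proof (cases "t = end_q")
  case True
  obtain \<kappa> where "stmtG rlx P G T end_q = Await len_q \<kappa>" by (rule stmtG_end_q)
  with True show ?thesis by (simp add: eG_def cur_event_def)
next
  case False
  with assms show ?thesis by (simp add: bounded_effect)
qed

text \<open>Step \<open>t\<close> of \<open>U\<close> in \<open>G'\<close> is step \<open>orig U t\<close> of \<open>U\<close> in \<open>G\<close>: the renaming \<open>r\<close> read backwards.\<close>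

definition orig :: "'t \<Rightarrow> nat \<Rightarrow> nat" where
  "orig U t = (if U \<noteq> T \<or> t < start_q then t else t + (len_q + 1))"

lemma orig_unchanged: "U \<noteq> T \<or> t < start_q \<Longrightarrow> orig U t = t"
  by (auto simp: orig_def)

lemma orig_shifted: "start_q \<le> t \<Longrightarrow> orig T t = t + (len_q + 1)"
  by (simp add: orig_def)

lemma ren_eq_Some_iff: "ren T start_q end_q len_q x = Some (U, t, e) \<longleftrightarrow> x = (U, orig U t, e)"
  using start_q_add_len_q by (cases x) (auto simp: ren_def orig_def)

lemma gE_delete_iter: "(U, t, e) \<in> gE G' \<longleftrightarrow> (U, orig U t, e) \<in> gE G"
  by (simp add: delete_iter_def Let_def ren_eq_Some_iff)

lemma ren_write:
  assumes "w \<in> gE G" and "is_write (evt w)"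
  shows "\<exists>w'. ren T start_q end_q len_q w = Some w' \<and> evt w' = evt w"
proof -
  obtain U t where w: "w = (U, t, eG rlx P G U t)"
    using assms(1) cons by (auto simp: consP_def)
  then have "\<not> (U = T \<and> start_q \<le> t \<and> t \<le> end_q)"
    using assms(2) not_is_write_failed_iteration by auto
  then show ?thesis using w by (auto simp: ren_def)
qed

lemma grf_delete_iter:
  "grf G' (U, t, e) = Option.bind (grf G (U, orig U t, e)) (ren T start_q end_q len_q)"
  by (simp add: delete_iter_def Let_def ren_inv_def orig_def)

lemma read_val_delete_iter: "read_val G' U t e = read_val G U (orig U t) e"
proof (cases "grf G (U, orig U t, e)")
  case None
  then show ?thesis by (simp add: read_val_def grf_delete_iter)
next
  case (Some w)
  then have "w \<in> gE G" and "is_write (evt w)"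
    using wf_graph unfolding wf_graph_def by blast+
  then obtain w' where "ren T start_q end_q len_q w = Some w'" and "evt w' = evt w"
    using ren_write by blast
  then show ?thesis
    using Some by (simp add: read_val_def grf_delete_iter)
qed

lemma cfg_delete_iter_unchanged: "U \<noteq> T \<or> t \<le> start_q \<Longrightarrow> cfg rlx P G' U t = cfg rlx P G U t"
proof (induction t)
  case (Suc t)
  then have "U \<noteq> T \<or> t < start_q" by auto
  moreover from this have "cfg rlx P G' U t = cfg rlx P G U t" using Suc.IH by auto
  ultimately show ?case by (simp add: Let_def read_val_delete_iter orig_unchanged)
qed simp

lemma step_delete_iter_unchanged:
  assumes "U \<noteq> T \<or> t < start_q"
  shows "kG rlx P G' U t = kG rlx P G U t"
    and "stmtG rlx P G' U t = stmtG rlx P G U t"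
    and "eG rlx P G' U t = eG rlx P G U t"
    and "vG rlx P G' U t = vG rlx P G U t"
proof -
  have cfg: "cfg rlx P G' U t = cfg rlx P G U t"
    using assms by (auto intro: cfg_delete_iter_unchanged)
  then show k: "kG rlx P G' U t = kG rlx P G U t" by (simp add: kG_def)
  have "sigmaG rlx P G' U t = sigmaG rlx P G U t" using cfg by (simp add: sigmaG_def)
  moreover have "read_val G' U t e = read_val G U t e" for e
    using assms by (simp add: read_val_delete_iter orig_unchanged)
  ultimately show "stmtG rlx P G' U t = stmtG rlx P G U t"
    and "eG rlx P G' U t = eG rlx P G U t" and "vG rlx P G' U t = vG rlx P G U t"
    using step_simulation[where R = "{}", OF k _ not_stmt_depends_empty] by simp_all
qed

lemma stopG_delete_iter_unchanged: "U \<noteq> T \<or> t < start_q \<Longrightarrow> stopG rlx P G' U t \<longleftrightarrow> stopG rlx P G U t"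
  unfolding stopG_def using step_delete_iter_unchanged[of U] by (auto simp: gE_delete_iter orig_unchanged)

lemma aliveG_delete_iter_unchanged: "U \<noteq> T \<or> t < start_q \<Longrightarrow> aliveG rlx P G' U t \<longleftrightarrow> aliveG rlx P G U t"
  unfolding aliveG_def using stopG_delete_iter_unchanged by auto

text \<open>The registers whose value at step \<open>u\<close> may stem from the failed iteration.\<close>

definition iter_vis :: "nat \<Rightarrow> 'r set" where
  "iter_vis u = (\<Union>t\<in>{start_q..<end_q}. visG rlx P G T t u)"

lemma not_stmt_depends_iter_vis:
  assumes "aliveG rlx P G T u" and "end_q < u"
  shows "\<not> stmt_depends (stmtG rlx P G T u) (iter_vis u)"
  unfolding iter_vis_def
proof (rule not_stmt_depends_UN)
  fix t assume "t \<in> {start_q..<end_q}"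
  moreover from this have "\<not> rrf rlx P G T t u" using bounded_effect(2) assms(2) by fastforce
  ultimately show "\<not> stmt_depends (stmtG rlx P G T u) (visG rlx P G T t u)"
    using assms by (simp add: rrf_def)
qed simp

lemma iter_vis_Suc: "end_q \<le> u \<Longrightarrow> iter_vis (Suc u) = iter_vis u - dom (deltaG rlx P G T u)"
  unfolding iter_vis_def by (auto simp: visG_Suc)

definition shift_agree :: "nat \<Rightarrow> bool" where
  "shift_agree t \<longleftrightarrow> kG rlx P G' T t = kG rlx P G T (t + (len_q + 1)) \<and>
     (\<forall>r. r \<notin> iter_vis (t + (len_q + 1)) \<longrightarrow>
          sigmaG rlx P G' T t r = sigmaG rlx P G T (t + (len_q + 1)) r)"

lemma shift_agree_start: "shift_agree start_q"
proof -
  have cfg: "cfg rlx P G' T start_q = cfg rlx P G T start_q"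
    by (simp add: cfg_delete_iter_unchanged)
  then have "kG rlx P G' T start_q = kG rlx P G T (Suc end_q)"
    using kG_start_q by (simp add: kG_def)
  moreover have "sigmaG rlx P G' T start_q r = sigmaG rlx P G T (Suc end_q) r"
    if "r \<notin> iter_vis (Suc end_q)" for r
  proof -
    have "r \<notin> iter_vis end_q" using that iter_vis_Suc[of end_q] deltaG_end_q by simp
    have "sigmaG rlx P G' T start_q r = sigmaG rlx P G T start_q r"
      using cfg by (simp add: sigmaG_def)
    also have "\<dots> = sigmaG rlx P G T end_q r"
      using sigmaG_eq_if_not_visible[of start_q end_q r rlx P G T] \<open>r \<notin> iter_vis end_q\<close> start_q_add_len_q
      by (simp add: iter_vis_def)
    also have "\<dots> = sigmaG rlx P G T (Suc end_q) r"
      by (simp add: sigmaG_Suc deltaG_end_q)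
    finally show ?thesis .
  qed
  moreover have "start_q + (len_q + 1) = Suc end_q" using start_q_add_len_q by simp
  ultimately show ?thesis by (simp add: shift_agree_def)
qed

lemma shift_agree_Suc:
  assumes agree: "shift_agree t" and "start_q \<le> t" and alive: "aliveG rlx P G T (t + (len_q + 1))"
  shows "stmtG rlx P G' T t = stmtG rlx P G T (t + (len_q + 1))"
    and "eG rlx P G' T t = eG rlx P G T (t + (len_q + 1))"
    and "vG rlx P G' T t = vG rlx P G T (t + (len_q + 1))"
    and "shift_agree (Suc t)"
proof -
  let ?u = "t + (len_q + 1)"
  have "end_q < ?u" using start_q_add_len_q \<open>start_q \<le> t\<close> by simp
  then have indep: "\<not> stmt_depends (stmtG rlx P G T ?u) (iter_vis ?u)"
    using not_stmt_depends_iter_vis alive by blast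
  have read_val: "read_val G' T t e = read_val G T ?u e" for e
    using \<open>start_q \<le> t\<close> by (simp add: read_val_delete_iter orig_shifted)
  have k: "kG rlx P G' T t = kG rlx P G T ?u"
    and \<sigma>: "\<And>r. r \<notin> iter_vis ?u \<Longrightarrow> sigmaG rlx P G' T t r = sigmaG rlx P G T ?u r"
    using agree by (simp_all add: shift_agree_def)
  note simulation = step_simulation[OF k \<sigma> indep read_val]
  show "stmtG rlx P G' T t = stmtG rlx P G T ?u" and "eG rlx P G' T t = eG rlx P G T ?u"
    and "vG rlx P G' T t = vG rlx P G T ?u"
    using simulation(1-3) by simp_all
  have "iter_vis (Suc ?u) = iter_vis ?u - dom (deltaG rlx P G T ?u)"
    using \<open>end_q < ?u\<close> by (simp add: iter_vis_Suc)
  with simulation(4,5) show "shift_agree (Suc t)" by (simp add: shift_agree_def)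
qed

lemma shift_agree: "start_q \<le> t \<Longrightarrow> aliveG rlx P G T (t + len_q) \<Longrightarrow> shift_agree t"
proof (induction t rule: nat_induct_at_least)
  case base
  show ?case by (rule shift_agree_start)
next
  case (Suc t)
  then show ?case using shift_agree_Suc(4) aliveG_mono[OF Suc.prems] by simp
qed

lemma step_delete_iter_shifted:
  assumes "start_q \<le> t" and "aliveG rlx P G T (t + (len_q + 1))"
  shows "stmtG rlx P G' T t = stmtG rlx P G T (t + (len_q + 1))"
    and "eG rlx P G' T t = eG rlx P G T (t + (len_q + 1))"
    and "vG rlx P G' T t = vG rlx P G T (t + (len_q + 1))"
  using shift_agree_Suc(1-3)[OF shift_agree assms] aliveG_mono[OF assms(2)] assms(1) by simp_all

lemma stopG_delete_iter_shifted:
  assumes "start_q \<le> t" and alive: "aliveG rlx P G T (t + len_q)"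
  shows "stopG rlx P G' T t \<longleftrightarrow> stopG rlx P G T (t + (len_q + 1))"
proof -
  have "kG rlx P G' T t = kG rlx P G T (t + (len_q + 1))"
    using shift_agree[OF assms] by (simp add: shift_agree_def)
  moreover have "(\<exists>e. (T, t, e) \<in> gE G') \<longleftrightarrow> (\<exists>e. (T, t + (len_q + 1), e) \<in> gE G)"
    using assms(1) by (simp add: gE_delete_iter orig_shifted)
  moreover have "(\<exists>t'. t = Suc t' \<and> read_blocked rlx P G' T t') \<longleftrightarrow>
      (\<exists>t'. t + (len_q + 1) = Suc t' \<and> read_blocked rlx P G T t')"
  proof (cases "t = start_q")
    case True
    have "aliveG rlx P G T start_q" using aliveG_mono[OF aliveG_end_q] start_q_add_len_q by simp
    then have "\<not> stopG rlx P G T start_q" by (simp add: aliveG_def)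
    then have "\<nexists>t'. t = Suc t' \<and> read_blocked rlx P G' T t'"
      using True step_delete_iter_unchanged by (auto simp: stopG_iff_read_blocked read_blocked_def)
    moreover obtain \<kappa> where "stmtG rlx P G T end_q = Await len_q \<kappa>" by (rule stmtG_end_q)
    then have "\<not> read_blocked rlx P G T end_q" by (simp add: read_blocked_def)
    ultimately show ?thesis using True start_q_add_len_q by auto
  next
    case False
    then obtain t' where "t = Suc t'" and "start_q \<le> t'" using assms(1) by (cases t) auto
    then show ?thesis using step_delete_iter_shifted[of t'] alive by (simp add: read_blocked_def)
  qed
  ultimately show ?thesis by (simp add: stopG_iff_read_blocked)
qed

lemma aliveG_delete_iter_shifted:
  "start_q \<le> t \<Longrightarrow> aliveG rlx P G' T t \<longleftrightarrow> aliveG rlx P G T (t + (len_q + 1))"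
proof (induction t rule: nat_induct_at_least)
  case base
  have "\<not> stopG rlx P G' T u" if "u < start_q" for u
  proof -
    have "\<not> stopG rlx P G T u"
      using that aliveG_end_q start_q_add_len_q unfolding aliveG_def by simp
    with that show ?thesis by (simp add: stopG_delete_iter_unchanged)
  qed
  then have "aliveG rlx P G' T start_q \<longleftrightarrow> \<not> stopG rlx P G' T start_q"
    by (simp add: aliveG_iff_prefix)
  also have "\<dots> \<longleftrightarrow> \<not> stopG rlx P G T (Suc end_q)"
    using stopG_delete_iter_shifted[of start_q] aliveG_end_q start_q_add_len_q by simp
  also have "\<dots> \<longleftrightarrow> aliveG rlx P G T (Suc end_q)"
    by (simp add: aliveG_Suc aliveG_end_q)
  finally show ?case using start_q_add_len_q by simp
next
  case (Suc t)
  have "aliveG rlx P G T (t + (len_q + 1)) \<Longrightarrow>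
      stopG rlx P G' T (Suc t) \<longleftrightarrow> stopG rlx P G T (Suc t + (len_q + 1))"
    using stopG_delete_iter_shifted[of "Suc t"] Suc.hyps by simp
  then show ?case
    using Suc.IH aliveG_Suc[of rlx P G' T t] aliveG_Suc[of rlx P G T "t + (len_q + 1)"] by auto
qed

lemma aliveG_delete_iter: "aliveG rlx P G' U t \<longleftrightarrow> aliveG rlx P G U (orig U t)"
  by (cases "U \<noteq> T \<or> t < start_q")
    (simp_all add: orig_unchanged orig_shifted aliveG_delete_iter_unchanged aliveG_delete_iter_shifted)

lemma eG_delete_iter: "aliveG rlx P G' U t \<Longrightarrow> eG rlx P G' U t = eG rlx P G U (orig U t)"
  by (cases "U \<noteq> T \<or> t < start_q")
    (simp_all add: orig_unchanged orig_shifted step_delete_iter_unchanged aliveG_delete_iter_shifted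
      step_delete_iter_shifted)

lemma consP_delete_iter: "consP rlx P G'"
  using cons by (auto simp: consP_iff gE_delete_iter aliveG_delete_iter eG_delete_iter)

end

theorem lemma6:
  fixes rlx :: 'm
    and P :: "('t::finite, 'r::finite, 'v::finite, 'l::finite, 'm) prog"
    and G :: "('t, 'l, 'v, 'm) graph"
    and T :: 't and q :: nat
  assumes "wf_prog P"
    and "wf_graph G"
    and "consP rlx P G"
    and "BE rlx P G"
    and "failG rlx P G T q"
  shows "consP rlx P (delete_iter rlx P G T q)"
proof -
  interpret failed_iteration rlx P G T q
    using assms by unfold_locales
  show ?thesis by (rule consP_delete_iter)
qed

end
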